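(* Let $f\in C^2([0,\infty))$ satisfy $f(u)>0$ and $f'(u)>0$ for all $u>0$, assume $f$ is log-concave, i.e. $f''(u)f(u)-f'(u)^2<0$ for all $u>0$, and assume moreover that \[ uf'(u)>f(u)\quad\text{for all } u>0 . \] Let $u(r)$ be any positive solution of \[ u''+\frac{1}{r}u'+f(u)=0,\quad 0<r<1,\qquad u'(0)=u(1)=0 . \] Then $u$ is non-singular, i.e. the linearized problem \[ w''+\frac{1}{r}w'+f'(u(r))w=0,\quad 0<r<1,\qquad w'(0)=w(1)=0 \] has only the trivial solution $w\equiv 0$. *)

theory Defs
  imports Complex_Main
begin

end

theory Submission
  imports Defs "HOL-Analysis.Analysis"
begin

(*
  Suppose w is a nontrivial solution of the linearized problem, and let L denote the operator
  w \<mapsto> w'' + w'/r + f'(u) w. For any \<phi> the weighted Wronskian r (\<phi> w' - \<phi>' w) has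
  derivative -r w L\<phi> wherever Lw = 0.

  With \<phi> = u one has Lu = u f'(u) - f(u) > 0, so by Rolle's theorem this Wronskian cannot vanish
  at both ends of a nodal interval of w; hence w has an interior zero z with w'(z) \<noteq> 0.
  With \<phi> = r u' + c and c = -z u'(z) one has \<phi>(z) = 0 and L\<phi> = c f'(u) - 2 f(u). Since u is
  decreasing and f'/f is decreasing (log-concavity), f'(u)/f(u) increases in r, so L\<phi> changes
  sign at most once. Comparing the Wronskian at the two ends of the nodal intervals to the left and
  to the right of z gives c f'(u(z)) > 2 f(u(z)) and c f'(u(z)) < 2 f(u(z)) respectively.
*)

lemma log_concave_ratio_decreasing:
  fixes f f' f'' :: "real \<Rightarrow> real"
  assumes f_deriv: "\<And>x. x > 0 \<Longrightarrow> (f has_real_derivative f' x) (at x)"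
    and f'_deriv: "\<And>x. x > 0 \<Longrightarrow> (f' has_real_derivative f'' x) (at x)"
    and f_pos: "\<And>x. x > 0 \<Longrightarrow> f x > 0"
    and log_concave: "\<And>x. x > 0 \<Longrightarrow> f'' x * f x - (f' x)\<^sup>2 < 0"
    and "0 < x" "x < y"
  shows "f' y / f y < f' x / f x"
proof (rule DERIV_neg_imp_decreasing[OF \<open>x < y\<close>])
  fix t assume "x \<le> t" "t \<le> y"
  then have "t > 0" using \<open>0 < x\<close> by simp
  have "((\<lambda>s. f' s / f s) has_real_derivative
          (f'' t * f t - f' t * f' t) / (f t * f t)) (at t)"
    by (rule DERIV_divide[OF f'_deriv f_deriv]) (use \<open>t > 0\<close> f_pos[OF \<open>t > 0\<close>] in auto)
  moreover have "(f'' t * f t - f' t * f' t) / (f t * f t) < 0"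
    using log_concave[OF \<open>t > 0\<close>] f_pos[OF \<open>t > 0\<close>]
    by (simp add: divide_neg_pos power2_eq_square)
  ultimately show "\<exists>d. ((\<lambda>s. f' s / f s) has_real_derivative d) (at t) \<and> d < 0"
    by blast
qed

lemma nonzero_on_interval_same_sign:
  fixes w :: "real \<Rightarrow> real"
  assumes "continuous_on {s..t} w" "s \<le> t" "\<And>x. s \<le> x \<Longrightarrow> x \<le> t \<Longrightarrow> w x \<noteq> 0"
  shows "w s < 0 \<longleftrightarrow> w t < 0"
  using IVT'[of w s 0 t] IVT2'[of w t 0 s] assms by (force simp: not_less)

lemma last_zero_before:
  fixes w :: "real \<Rightarrow> real"
  assumes cont: "continuous_on {lo..r} w" and "lo < r" "w r \<noteq> 0"
  obtains a where "lo \<le> a" "a < r" "a = lo \<or> w a = 0" "\<And>t. a < t \<Longrightarrow> t \<le> r \<Longrightarrow> w t \<noteq> 0"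
proof (cases "\<exists>x\<in>{lo..r}. w x = 0")
  case False
  then show ?thesis using that[of lo] \<open>lo < r\<close> by fastforce
next
  case True
  define Z where "Z = {x \<in> {lo..r}. w x = 0}"
  have "closed Z" "Z \<noteq> {}" "bdd_above Z"
    using continuous_closed_preimage_constant[OF cont] True by (auto simp: Z_def)
  then have "Sup Z \<in> Z" and Sup_upper: "\<And>x. x \<in> Z \<Longrightarrow> x \<le> Sup Z"
    by (auto intro: closed_contains_Sup cSup_upper)
  show ?thesis
  proof (rule that[of "Sup Z"])
    show "lo \<le> Sup Z" "Sup Z = lo \<or> w (Sup Z) = 0"
      using \<open>Sup Z \<in> Z\<close> by (auto simp: Z_def)
    show "Sup Z < r"
      using \<open>Sup Z \<in> Z\<close> \<open>w r \<noteq> 0\<close> by (auto simp: Z_def order.order_iff_strict)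
    show "w t \<noteq> 0" if "Sup Z < t" "t \<le> r" for t
      using that Sup_upper[of t] \<open>lo \<le> Sup Z\<close> by (auto simp: Z_def)
  qed
qed

lemma first_zero_after:
  fixes w :: "real \<Rightarrow> real"
  assumes cont: "continuous_on {r..hi} w" and "r < hi" "w r \<noteq> 0" "w hi = 0"
  obtains b where "r < b" "b \<le> hi" "w b = 0" "\<And>t. r \<le> t \<Longrightarrow> t < b \<Longrightarrow> w t \<noteq> 0"
proof -
  have "continuous_on {-hi..-r} (\<lambda>t. w (- t))"
    by (rule continuous_on_compose2[OF cont]) (auto intro: continuous_intros)
  from last_zero_before[OF this] obtain a where a:
    "-hi \<le> a" "a < -r" "a = -hi \<or> w (-a) = 0" "\<And>t. a < t \<Longrightarrow> t \<le> -r \<Longrightarrow> w (-t) \<noteq> 0"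
    using assms by auto
  show ?thesis
  proof (rule that[of "-a"])
    show "w t \<noteq> 0" if "r \<le> t" "t < -a" for t
      using a(4)[of "-t"] that by simp
  qed (use a \<open>w hi = 0\<close> in auto)
qed

lemma negative_interval_ending_at:
  fixes w :: "real \<Rightarrow> real"
  assumes cont: "continuous_on {lo..z} w" and "lo < z" "d > 0"
    and neg: "\<And>h. 0 < h \<Longrightarrow> h < d \<Longrightarrow> w (z - h) < 0"
  obtains a where "lo \<le> a" "a < z" "a = lo \<or> w a = 0" "\<And>t. a < t \<Longrightarrow> t < z \<Longrightarrow> w t < 0"
proof -
  obtain h where "0 < h" "h < d" "h < z - lo"
    using field_lbound_gt_zero[of d "z - lo"] \<open>lo < z\<close> \<open>d > 0\<close> by auto
  define r where "r = z - h"
  have r: "lo < r" "r < z" "z - r < d"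
    using \<open>0 < h\<close> \<open>h < d\<close> \<open>h < z - lo\<close> by (auto simp: r_def)
  have "w r < 0"
    using neg[of "z - r"] r by simp
  have cont_r: "continuous_on {s..r} w" if "lo \<le> s" for s
    by (rule continuous_on_subset[OF cont]) (use that r in auto)
  obtain a where a: "lo \<le> a" "a < r" "a = lo \<or> w a = 0" "\<And>t. a < t \<Longrightarrow> t \<le> r \<Longrightarrow> w t \<noteq> 0"
    using last_zero_before[OF cont_r \<open>lo < r\<close> _] \<open>w r < 0\<close> by auto
  show ?thesis
  proof (rule that[of a])
    show "w t < 0" if "a < t" "t < z" for t
    proof (cases "t \<le> r")
      case True
      have "w t < 0 \<longleftrightarrow> w r < 0"
        by (rule nonzero_on_interval_same_sign[OF cont_r True]) (use a that in auto)
      then show ?thesis using \<open>w r < 0\<close> by simp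
    next
      case False
      then show ?thesis using neg[of "z - t"] r that by simp
    qed
  qed (use a r in auto)
qed

lemma positive_interval_starting_at:
  fixes w :: "real \<Rightarrow> real"
  assumes cont: "continuous_on {z..hi} w" and "z < hi" "w hi = 0" "d > 0"
    and pos: "\<And>h. 0 < h \<Longrightarrow> h < d \<Longrightarrow> w (z + h) > 0"
  obtains b where "z < b" "b \<le> hi" "w b = 0" "\<And>t. z < t \<Longrightarrow> t < b \<Longrightarrow> w t > 0"
proof -
  have "continuous_on {-hi..-z} (\<lambda>t. - w (- t))"
    by (intro continuous_on_minus continuous_on_compose2[OF cont] continuous_intros) auto
  then obtain a where a: "-hi \<le> a" "a < -z" "a = -hi \<or> w (-a) = 0"
      "\<And>t. a < t \<Longrightarrow> t < -z \<Longrightarrow> w (-t) > 0"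
    by (rule negative_interval_ending_at) (use assms in \<open>auto simp: add.commute\<close>)
  show ?thesis
  proof (rule that[of "-a"])
    show "w t > 0" if "z < t" "t < -a" for t
      using a(4)[of "-t"] that by simp
  qed (use a \<open>w hi = 0\<close> in auto)
qed

lemma has_real_derivative_nonpos_at_left_max:
  fixes g :: "real \<Rightarrow> real"
  assumes "(g has_real_derivative D) (at a within S)" "a < b" "{a<..<b} \<subseteq> S"
    and "\<And>t. a < t \<Longrightarrow> t < b \<Longrightarrow> g t \<le> g a"
  shows "D \<le> 0"
proof (rule ccontr)
  assume "\<not> D \<le> 0"
  with has_real_derivative_pos_inc_right[OF assms(1)] obtain d where
    "d > 0" "\<And>h. 0 < h \<Longrightarrow> a + h \<in> S \<Longrightarrow> h < d \<Longrightarrow> g a < g (a + h)"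
    by auto
  moreover obtain h where "0 < h" "h < d" "h < b - a"
    using field_lbound_gt_zero[of d "b - a"] \<open>a < b\<close> \<open>d > 0\<close> by auto
  ultimately have "g a < g (a + h)" "a + h < b"
    using assms(3) by (auto simp: subset_eq)
  then show False
    using assms(4)[of "a + h"] \<open>0 < h\<close> by simp
qed

lemma has_real_derivative_nonpos_at_right_min:
  fixes g :: "real \<Rightarrow> real"
  assumes "(g has_real_derivative D) (at b within S)" "a < b" "{a<..<b} \<subseteq> S"
    and "\<And>t. a < t \<Longrightarrow> t < b \<Longrightarrow> g b \<le> g t"
  shows "D \<le> 0"
proof (rule ccontr)
  assume "\<not> D \<le> 0"
  with has_real_derivative_pos_inc_left[OF assms(1)] obtain d where
    "d > 0" "\<And>h. 0 < h \<Longrightarrow> b - h \<in> S \<Longrightarrow> h < d \<Longrightarrow> g (b - h) < g b"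
    by auto
  moreover obtain h where "0 < h" "h < d" "h < b - a"
    using field_lbound_gt_zero[of d "b - a"] \<open>a < b\<close> \<open>d > 0\<close> by auto
  ultimately have "g (b - h) < g b" "a < b - h"
    using assms(3) by (auto simp: subset_eq)
  then show False
    using assms(4)[of "b - h"] \<open>0 < h\<close> by simp
qed

definition radial_wronskian ::
    "(real \<Rightarrow> real) \<Rightarrow> (real \<Rightarrow> real) \<Rightarrow> (real \<Rightarrow> real) \<Rightarrow> (real \<Rightarrow> real) \<Rightarrow> real \<Rightarrow> real" where
  "radial_wronskian \<phi> \<phi>' w w' r = r * (\<phi> r * w' r - \<phi>' r * w r)"

lemma radial_wronskian_has_derivative:
  fixes \<phi> \<phi>' \<phi>'' w w' w'' :: "real \<Rightarrow> real"
  assumes "r \<noteq> 0"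
    and "(\<phi> has_real_derivative \<phi>' r) (at r)" "(\<phi>' has_real_derivative \<phi>'' r) (at r)"
    and "(w has_real_derivative w' r) (at r)" "(w' has_real_derivative w'' r) (at r)"
    and \<phi>_eq: "\<phi>'' r + \<phi>' r / r + q * \<phi> r = g"
    and w_eq: "w'' r + w' r / r + q * w r = 0"
  shows "(radial_wronskian \<phi> \<phi>' w w' has_real_derivative - (r * w r * g)) (at r)"
proof -
  have second_derivs: "\<phi>'' r = (g - q * \<phi> r) - \<phi>' r / r" "w'' r = - q * w r - w' r / r"
    using \<phi>_eq w_eq by (simp_all add: algebra_simps)
  show ?thesis
    unfolding radial_wronskian_def
    by (rule derivative_eq_intros assms refl)+
      (use \<open>r \<noteq> 0\<close> in \<open>simp add: second_derivs field_simps\<close>)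
qed

lemma radial_wronskian_continuous_on:
  "continuous_on S \<phi> \<Longrightarrow> continuous_on S \<phi>' \<Longrightarrow> continuous_on S w \<Longrightarrow> continuous_on S w' \<Longrightarrow>
    continuous_on S (radial_wronskian \<phi> \<phi>' w w')"
  unfolding radial_wronskian_def by (intro continuous_intros)

locale radial_positive_solution =
  fixes f f' u u' u'' :: "real \<Rightarrow> real"
  assumes f_deriv: "\<And>x. x > 0 \<Longrightarrow> (f has_real_derivative f' x) (at x)"
    and f_pos: "\<And>x. x > 0 \<Longrightarrow> f x > 0"
    and f_ratio_decreasing: "\<And>x y. 0 < x \<Longrightarrow> x < y \<Longrightarrow> f' y / f y < f' x / f x"
    and f_superlinear: "\<And>x. x > 0 \<Longrightarrow> f x < x * f' x"
    and u_deriv: "\<And>r. r \<in> {0..1} \<Longrightarrow> (u has_real_derivative u' r) (at r within {0..1})"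
    and u'_deriv: "\<And>r. r \<in> {0..1} \<Longrightarrow> (u' has_real_derivative u'' r) (at r within {0..1})"
    and u''_cont: "continuous_on {0..1} u''"
    and u_ode: "\<And>r. 0 < r \<Longrightarrow> r < 1 \<Longrightarrow> u'' r + u' r / r + f (u r) = 0"
    and u_boundary: "u 1 = 0"
    and u_pos: "\<And>r. 0 < r \<Longrightarrow> r < 1 \<Longrightarrow> u r > 0"
begin

lemma u_has_derivative_at: "0 < r \<Longrightarrow> r < 1 \<Longrightarrow> (u has_real_derivative u' r) (at r)"
  using u_deriv[of r] at_within_Icc_at[of 0 r 1] by simp

lemma u'_has_derivative_at: "0 < r \<Longrightarrow> r < 1 \<Longrightarrow> (u' has_real_derivative u'' r) (at r)"
  using u'_deriv[of r] at_within_Icc_at[of 0 r 1] by simp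

lemma u_continuous_on: "continuous_on {0..1} u"
  by (rule DERIV_continuous_on[OF u_deriv])

lemma u'_continuous_on: "continuous_on {0..1} u'"
  by (rule DERIV_continuous_on[OF u'_deriv])

lemma flux_has_derivative:
  assumes "0 < r" "r < 1"
  shows "((\<lambda>s. s * u' s) has_real_derivative - (r * f (u r))) (at r)"
proof -
  have "((\<lambda>s. s * u' s) has_real_derivative u' r + r * u'' r) (at r)"
    by (rule derivative_eq_intros u'_has_derivative_at assms refl)+ simp
  also have "u' r + r * u'' r = - (r * f (u r))"
    using u_ode[OF assms] assms by (simp add: field_simps)
  finally show ?thesis .
qed

lemma flux_strict_decreasing:
  assumes "0 \<le> x" "x < y" "y \<le> 1"
  shows "y * u' y < x * u' x"
proof (rule DERIV_neg_imp_decreasing_open[OF \<open>x < y\<close>])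
  fix r assume "x < r" "r < y"
  then have r: "0 < r" "r < 1" using assms by auto
  show "\<exists>d. ((\<lambda>s. s * u' s) has_real_derivative d) (at r) \<and> d < 0"
    using flux_has_derivative[OF r] f_pos[OF u_pos[OF r]] r by auto
next
  show "continuous_on {x..y} (\<lambda>s. s * u' s)"
    by (intro continuous_intros continuous_on_subset[OF u'_continuous_on]) (use assms in auto)
qed

lemma u'_neg: "0 < r \<Longrightarrow> r \<le> 1 \<Longrightarrow> u' r < 0"
  using flux_strict_decreasing[of 0 r] by (simp add: mult_less_0_iff)

lemma ratio_increasing:
  assumes "0 < x" "x < y" "y < 1"
  shows "f' (u x) / f (u x) < f' (u y) / f (u y)"
proof -
  have "u y < u x"
  proof (rule DERIV_neg_imp_decreasing_open[OF \<open>x < y\<close>])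
    fix r assume "x < r" "r < y"
    then show "\<exists>d. (u has_real_derivative d) (at r) \<and> d < 0"
      using u_has_derivative_at u'_neg assms by fastforce
  qed (rule continuous_on_subset[OF u_continuous_on], use assms in auto)
  then show ?thesis
    using f_ratio_decreasing u_pos assms by simp
qed

lemma flux_derivative_has_derivative:
  assumes "0 < r" "r < 1"
  shows "((\<lambda>s. u' s + s * u'' s) has_real_derivative - (f (u r) + r * (f' (u r) * u' r))) (at r)"
proof -
  have "((\<lambda>s. - (s * f (u s))) has_real_derivative - (f (u r) + r * (f' (u r) * u' r))) (at r)"
    by (rule derivative_eq_intros DERIV_chain2[OF f_deriv u_has_derivative_at] u_pos assms refl)+
      simp
  then show ?thesis
  proof (rule has_field_derivative_transform_within_open)
    show "- (s * f (u s)) = u' s + s * u'' s" if "s \<in> {0<..<1}" for s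
      using u_ode[of s] that by (auto simp: field_simps)
  qed (use assms in auto)
qed

definition linearized_solution :: "(real \<Rightarrow> real) \<Rightarrow> (real \<Rightarrow> real) \<Rightarrow> (real \<Rightarrow> real) \<Rightarrow> bool" where
  "linearized_solution w w' w'' \<longleftrightarrow>
     (\<forall>r\<in>{0..1}. (w has_real_derivative w' r) (at r within {0..1}))
   \<and> (\<forall>r\<in>{0..1}. (w' has_real_derivative w'' r) (at r within {0..1}))
   \<and> (\<forall>r. 0 < r \<and> r < 1 \<longrightarrow> w'' r + w' r / r + f' (u r) * w r = 0)"

lemma linearized_solution_uminus:
  "linearized_solution w w' w'' \<Longrightarrow> linearized_solution (\<lambda>r. - w r) (\<lambda>r. - w' r) (\<lambda>r. - w'' r)"
  unfolding linearized_solution_def by (auto intro!: DERIV_minus)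

context
  fixes w w' w'' assumes lin: "linearized_solution w w' w''"
begin

lemma w_has_derivative_within: "r \<in> {0..1} \<Longrightarrow> (w has_real_derivative w' r) (at r within {0..1})"
  using lin by (simp add: linearized_solution_def)

lemma w_has_derivative_at: "0 < r \<Longrightarrow> r < 1 \<Longrightarrow> (w has_real_derivative w' r) (at r)"
  using w_has_derivative_within[of r] at_within_Icc_at[of 0 r 1] by simp

lemma w'_has_derivative_within: "r \<in> {0..1} \<Longrightarrow> (w' has_real_derivative w'' r) (at r within {0..1})"
  using lin by (simp add: linearized_solution_def)

lemma w'_has_derivative_at: "0 < r \<Longrightarrow> r < 1 \<Longrightarrow> (w' has_real_derivative w'' r) (at r)"
  using w'_has_derivative_within[of r] at_within_Icc_at[of 0 r 1] by simp

lemma w_continuous_on: "continuous_on {0..1} w"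
  by (rule DERIV_continuous_on[OF w_has_derivative_within])

lemma w'_continuous_on: "continuous_on {0..1} w'"
  by (rule DERIV_continuous_on[OF w'_has_derivative_within])

lemma w_ode: "0 < r \<Longrightarrow> r < 1 \<Longrightarrow> w'' r + w' r / r + f' (u r) * w r = 0"
  using lin by (simp add: linearized_solution_def)

lemma wronskian_u_has_derivative:
  assumes "0 < r" "r < 1"
  shows "(radial_wronskian u u' w w' has_real_derivative
            - (r * w r * (u r * f' (u r) - f (u r)))) (at r)"
  by (rule radial_wronskian_has_derivative[where q = "f' (u r)"])
    (use assms u_ode[OF assms] w_ode[OF assms] in
      \<open>auto intro: u_has_derivative_at u'_has_derivative_at w_has_derivative_at w'_has_derivative_at
             simp: algebra_simps\<close>)

lemma wronskian_flux_has_derivative: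
  assumes "0 < r" "r < 1"
  shows "(radial_wronskian (\<lambda>s. s * u' s + c) (\<lambda>s. u' s + s * u'' s) w w' has_real_derivative
            - (r * w r * (c * f' (u r) - 2 * f (u r)))) (at r)"
proof (rule radial_wronskian_has_derivative[where q = "f' (u r)"])
  show "((\<lambda>s. s * u' s + c) has_real_derivative u' r + r * u'' r) (at r)"
    by (rule derivative_eq_intros u'_has_derivative_at assms refl)+ simp
  have "u' r + r * u'' r = - (r * f (u r))"
    using u_ode[OF assms] assms by (simp add: field_simps)
  then show "- (f (u r) + r * (f' (u r) * u' r)) + (u' r + r * u'' r) / r + f' (u r) * (r * u' r + c)
      = c * f' (u r) - 2 * f (u r)"
    using assms by (simp add: field_simps)
qed (use assms flux_derivative_has_derivative w_has_derivative_at w'_has_derivative_at w_ode in auto)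

lemma wronskian_u_continuous_on: "continuous_on {0..1} (radial_wronskian u u' w w')"
  by (intro radial_wronskian_continuous_on u_continuous_on u'_continuous_on w_continuous_on
      w'_continuous_on)

lemma wronskian_flux_continuous_on:
  "continuous_on {0..1} (radial_wronskian (\<lambda>s. s * u' s + c) (\<lambda>s. u' s + s * u'' s) w w')"
  by (intro radial_wronskian_continuous_on continuous_intros u'_continuous_on u''_cont
      w_continuous_on w'_continuous_on)

lemma nodal_interval_transversal_end:
  assumes "0 \<le> a" "a < b" "b \<le> 1" "a = 0 \<or> w a = 0" "w b = 0"
    and nonzero: "\<And>t. a < t \<Longrightarrow> t < b \<Longrightarrow> w t \<noteq> 0"
  shows "(0 < a \<and> w' a \<noteq> 0) \<or> (b < 1 \<and> w' b \<noteq> 0)"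
proof (rule ccontr)
  let ?W = "radial_wronskian u u' w w'"
  assume "\<not> ?thesis"
  then have "?W a = ?W b"
    using assms u_boundary by (auto simp: radial_wronskian_def)
  moreover have "continuous_on {a..b} ?W"
    by (rule continuous_on_subset[OF wronskian_u_continuous_on]) (use assms in auto)
  moreover have "?W differentiable (at r)" if "a < r" "r < b" for r
    using wronskian_u_has_derivative[of r] that assms real_differentiable_def by force
  ultimately obtain r where r: "a < r" "r < b" "(?W has_real_derivative 0) (at r)"
    using Rolle[OF \<open>a < b\<close>] by blast
  then have "0 < r" "r < 1" using assms by auto
  then have "r * w r * (u r * f' (u r) - f (u r)) = 0"
    using DERIV_unique[OF r(3) wronskian_u_has_derivative] by simp
  then show False
    using nonzero[OF r(1,2)] f_superlinear[OF u_pos] \<open>0 < r\<close> \<open>r < 1\<close> by fastforce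
qed

lemma zero_after_negative_interval:
  assumes "0 \<le> a" "a < z" "z < 1" "a = 0 \<or> w a = 0" "w z = 0"
    and neg: "\<And>t. a < t \<Longrightarrow> t < z \<Longrightarrow> w t < 0"
  shows "2 * f (u z) < - (z * u' z) * f' (u z)"
proof (rule ccontr)
  define c where "c = - (z * u' z)"
  let ?W = "radial_wronskian (\<lambda>s. s * u' s + c) (\<lambda>s. u' s + s * u'' s) w w'"
  assume "\<not> ?thesis"
  then have small: "c * (f' (u z) / f (u z)) \<le> 2"
    using f_pos[OF u_pos, of z] assms by (simp add: c_def field_simps)
  have "c > 0"
    using u'_neg[of z] assms by (simp add: c_def mult_pos_neg)
  have "?W z < ?W a"
  proof (rule DERIV_neg_imp_decreasing_open[OF \<open>a < z\<close>])
    fix r assume "a < r" "r < z"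
    then have r: "0 < r" "r < 1" using assms by auto
    have "c * (f' (u r) / f (u r)) < 2"
      using mult_strict_left_mono[OF ratio_increasing[OF r(1) \<open>r < z\<close> \<open>z < 1\<close>] \<open>c > 0\<close>] small
      by simp
    then have "c * f' (u r) - 2 * f (u r) < 0"
      using f_pos[OF u_pos[OF r]] by (simp add: field_simps)
    then have "- (r * w r * (c * f' (u r) - 2 * f (u r))) < 0"
      using neg[OF \<open>a < r\<close> \<open>r < z\<close>] r by (simp add: mult_pos_neg mult_neg_neg)
    then show "\<exists>d. (?W has_real_derivative d) (at r) \<and> d < 0"
      using wronskian_flux_has_derivative[OF r] by blast
  qed (rule continuous_on_subset[OF wronskian_flux_continuous_on], use assms in auto)
  moreover have "?W z = 0"
    using \<open>w z = 0\<close> by (simp add: radial_wronskian_def c_def)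
  moreover have "?W a \<le> 0"
  proof (cases "a = 0")
    case False
    then have "w a = 0" "0 < a" using assms by auto
    have "0 < a * u' a + c"
      using flux_strict_decreasing[of a z] assms by (simp add: c_def)
    moreover have "w' a \<le> 0"
      by (rule has_real_derivative_nonpos_at_left_max[OF w_has_derivative_within \<open>a < z\<close>])
        (use \<open>w a = 0\<close> assms neg in \<open>auto intro: less_imp_le\<close>)
    ultimately show ?thesis
      using \<open>w a = 0\<close> \<open>0 < a\<close> by (simp add: radial_wronskian_def mult_nonneg_nonpos)
  qed (simp add: radial_wronskian_def)
  ultimately show False by simp
qed

lemma zero_before_positive_interval:
  assumes "0 < z" "z < b" "b \<le> 1" "w z = 0" "w b = 0"
    and pos: "\<And>t. z < t \<Longrightarrow> t < b \<Longrightarrow> w t > 0"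
  shows "- (z * u' z) * f' (u z) < 2 * f (u z)"
proof (rule ccontr)
  define c where "c = - (z * u' z)"
  let ?W = "radial_wronskian (\<lambda>s. s * u' s + c) (\<lambda>s. u' s + s * u'' s) w w'"
  assume "\<not> ?thesis"
  then have large: "2 \<le> c * (f' (u z) / f (u z))"
    using f_pos[OF u_pos, of z] assms by (simp add: c_def field_simps)
  have "c > 0"
    using u'_neg[of z] assms by (simp add: c_def mult_pos_neg)
  have "?W b < ?W z"
  proof (rule DERIV_neg_imp_decreasing_open[OF \<open>z < b\<close>])
    fix r assume "z < r" "r < b"
    then have r: "0 < r" "r < 1" using assms by auto
    have "2 < c * (f' (u r) / f (u r))"
      using mult_strict_left_mono[OF ratio_increasing[OF \<open>0 < z\<close> \<open>z < r\<close> r(2)] \<open>c > 0\<close>] large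
      by simp
    then have "0 < c * f' (u r) - 2 * f (u r)"
      using f_pos[OF u_pos[OF r]] by (simp add: field_simps)
    then have "- (r * w r * (c * f' (u r) - 2 * f (u r))) < 0"
      using pos[OF \<open>z < r\<close> \<open>r < b\<close>] r by simp
    then show "\<exists>d. (?W has_real_derivative d) (at r) \<and> d < 0"
      using wronskian_flux_has_derivative[OF r] by blast
  qed (rule continuous_on_subset[OF wronskian_flux_continuous_on], use assms in auto)
  moreover have "?W z = 0"
    using \<open>w z = 0\<close> by (simp add: radial_wronskian_def c_def)
  moreover have "0 \<le> ?W b"
  proof -
    have "b * u' b + c < 0"
      using flux_strict_decreasing[of z b] assms by (simp add: c_def)
    moreover have "w' b \<le> 0"
      by (rule has_real_derivative_nonpos_at_right_min[OF w_has_derivative_within \<open>z < b\<close>])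
        (use assms pos in \<open>auto intro: less_imp_le\<close>)
    ultimately show ?thesis
      using \<open>w b = 0\<close> assms by (simp add: radial_wronskian_def mult_nonpos_nonpos)
  qed
  ultimately show False by simp
qed

lemma no_interior_zero_with_positive_slope:
  assumes "w 1 = 0" "0 < z" "z < 1" "w z = 0" "w' z > 0"
  shows False
proof -
  have deriv: "(w has_real_derivative w' z) (at z)"
    using w_has_derivative_at assms by simp
  have cont: "continuous_on {s..t} w" if "0 \<le> s" "t \<le> 1" for s t
    by (rule continuous_on_subset[OF w_continuous_on]) (use that in auto)
  obtain d1 where d1: "d1 > 0" "\<And>h. 0 < h \<Longrightarrow> h < d1 \<Longrightarrow> w (z - h) < 0"
    using DERIV_pos_inc_left[OF deriv \<open>w' z > 0\<close>] \<open>w z = 0\<close> by auto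
  obtain a where a: "0 \<le> a" "a < z" "a = 0 \<or> w a = 0" "\<And>t. a < t \<Longrightarrow> t < z \<Longrightarrow> w t < 0"
    using negative_interval_ending_at[OF cont \<open>0 < z\<close> d1] \<open>z < 1\<close> by auto
  obtain d2 where d2: "d2 > 0" "\<And>h. 0 < h \<Longrightarrow> h < d2 \<Longrightarrow> w (z + h) > 0"
    using DERIV_pos_inc_right[OF deriv \<open>w' z > 0\<close>] \<open>w z = 0\<close> by auto
  obtain b where b: "z < b" "b \<le> 1" "w b = 0" "\<And>t. z < t \<Longrightarrow> t < b \<Longrightarrow> w t > 0"
    using positive_interval_starting_at[OF cont \<open>z < 1\<close> \<open>w 1 = 0\<close> d2] \<open>0 < z\<close> by auto
  have "2 * f (u z) < - (z * u' z) * f' (u z)"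
    by (rule zero_after_negative_interval[OF a(1,2) \<open>z < 1\<close> a(3) \<open>w z = 0\<close> a(4)])
  moreover have "- (z * u' z) * f' (u z) < 2 * f (u z)"
    by (rule zero_before_positive_interval[OF \<open>0 < z\<close> b(1,2) \<open>w z = 0\<close> b(3,4)])
  ultimately show False by simp
qed

end

lemma linearized_solution_vanishes_inside:
  assumes lin: "linearized_solution w w' w''" and "w 1 = 0" "0 < r" "r < 1"
  shows "w r = 0"
proof (rule ccontr)
  assume "w r \<noteq> 0"
  have cont: "continuous_on {s..t} w" if "0 \<le> s" "t \<le> 1" for s t
    by (rule continuous_on_subset[OF w_continuous_on[OF lin]]) (use that in auto)
  obtain a where a: "0 \<le> a" "a < r" "a = 0 \<or> w a = 0" "\<And>t. a < t \<Longrightarrow> t \<le> r \<Longrightarrow> w t \<noteq> 0"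
    using last_zero_before[OF cont \<open>0 < r\<close> \<open>w r \<noteq> 0\<close>] \<open>r < 1\<close> by auto
  obtain b where b: "r < b" "b \<le> 1" "w b = 0" "\<And>t. r \<le> t \<Longrightarrow> t < b \<Longrightarrow> w t \<noteq> 0"
    using first_zero_after[OF cont \<open>r < 1\<close> \<open>w r \<noteq> 0\<close> \<open>w 1 = 0\<close>] \<open>0 < r\<close> by auto
  have nodal: "w t \<noteq> 0" if "a < t" "t < b" for t
    using a(4)[of t] b(4)[of t] that by (cases "t \<le> r") auto
  have "(0 < a \<and> w' a \<noteq> 0) \<or> (b < 1 \<and> w' b \<noteq> 0)"
    using \<open>a < r\<close> \<open>r < b\<close>
    by (intro nodal_interval_transversal_end[OF lin a(1) _ b(2) a(3) b(3) nodal]) auto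
  then obtain z where z: "0 < z" "z < 1" "w z = 0" "w' z \<noteq> 0"
  proof (elim disjE conjE)
    assume "0 < a" "w' a \<noteq> 0"
    then show thesis using that[of a] a(3) \<open>a < r\<close> \<open>r < 1\<close> by auto
  next
    assume "b < 1" "w' b \<noteq> 0"
    then show thesis using that[of b] b(3) \<open>0 < r\<close> \<open>r < b\<close> by auto
  qed
  show False
  proof (cases "w' z > 0")
    case True
    then show False using no_interior_zero_with_positive_slope[OF lin \<open>w 1 = 0\<close> z(1-3)] by simp
  next
    case False
    then show False
      using no_interior_zero_with_positive_slope[OF linearized_solution_uminus[OF lin], of z] z \<open>w 1 = 0\<close>
      by (simp add: not_less order.order_iff_strict)
  qed
qed

end

theorem theorem3p2:
  fixes f f' f'' :: "real \<Rightarrow> real"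
    and u u' u'' :: "real \<Rightarrow> real"
  assumes f_d1: "\<And>x. x \<ge> 0 \<Longrightarrow> (f has_real_derivative f' x) (at x within {0..})"
    and f_d2: "\<And>x. x \<ge> 0 \<Longrightarrow> (f' has_real_derivative f'' x) (at x within {0..})"
    and f_C2: "continuous_on {0..} f''"
    and f_pos: "\<And>x. x > 0 \<Longrightarrow> f x > 0"
    and f'_pos: "\<And>x. x > 0 \<Longrightarrow> f' x > 0"
    and f_logconc: "\<And>x. x > 0 \<Longrightarrow> f'' x * f x - (f' x)\<^sup>2 < 0"
    and f_super: "\<And>x. x > 0 \<Longrightarrow> x * f' x > f x"
    and u_d1: "\<And>r. r \<in> {0..1} \<Longrightarrow> (u has_real_derivative u' r) (at r within {0..1})"
    and u_d2: "\<And>r. r \<in> {0..1} \<Longrightarrow> (u' has_real_derivative u'' r) (at r within {0..1})"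
    and u_C2: "continuous_on {0..1} u''"
    and u_eq: "\<And>r. 0 < r \<Longrightarrow> r < 1 \<Longrightarrow> u'' r + u' r / r + f (u r) = 0"
    and u_bc: "u' 0 = 0" "u 1 = 0"
    and u_pos: "\<And>r. 0 < r \<Longrightarrow> r < 1 \<Longrightarrow> u r > 0"
  shows "\<forall>w w' w''.
           (\<forall>r\<in>{0..1}. (w has_real_derivative w' r) (at r within {0..1}))
         \<and> (\<forall>r\<in>{0..1}. (w' has_real_derivative w'' r) (at r within {0..1}))
         \<and> continuous_on {0..1} w''
         \<and> (\<forall>r. 0 < r \<and> r < 1 \<longrightarrow> w'' r + w' r / r + f' (u r) * w r = 0)
         \<and> w' 0 = 0 \<and> w 1 = 0
         \<longrightarrow> (\<forall>r\<in>{0..1}. w r = 0)"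
proof -
  have f_at: "(f has_real_derivative f' x) (at x)" and f'_at: "(f' has_real_derivative f'' x) (at x)"
    if "x > 0" for x
    using f_d1[of x] f_d2[of x] at_within_interior[of x "{0..}"] that by simp_all
  interpret radial_positive_solution f f' u u' u''
    using f_at f_pos log_concave_ratio_decreasing[OF f_at f'_at f_pos f_logconc] f_super
      u_d1 u_d2 u_C2 u_eq u_bc(2) u_pos
    by unfold_locales auto
  have "w r = 0" if "linearized_solution w w' w''" "w 1 = 0" "r \<in> {0..1}" for w w' w'' r
    using continuous_constant_on_closure[of "{0<..<1}" w 0 r]
      w_continuous_on linearized_solution_vanishes_inside that by auto
  then show ?thesis
    unfolding linearized_solution_def by blast
qed

end
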